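(* Let $X$ be a real Hilbert space, let $\gamma>0$, and let $f:X\to(-\infty,+\infty]$ be a proper $\Phi_{lsc}^{\mathbb{R}}$-convex function such that $\mathrm{dom}\, f=\mathrm{dom}\,\partial_{lsc}^{\mathbb{R}} f$. Let $x_0\in\mathrm{dom}\, f$. If there exist $a_0\geq -\frac{1}{2\gamma}$ and $x\in X$ such that $$x\in\arg\min_{z\in X}\Big[f(z)+\Big(\tfrac{1}{2\gamma}+a_0\Big)\|z-x_0\|^2\Big],$$ then $\big(J_\gamma(x_0)-J_\gamma(x)\big)\cap\partial_{lsc}^{\mathbb{R}} f(x)\neq\emptyset$, where $J_\gamma(x_0)-J_\gamma(x)=\{\phi_0-\phi:\ \phi_0\in J_\gamma(x_0),\ \phi\in J_\gamma(x)\}\subset\mathbb{R}\times X$.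
   Context: $\Phi_{lsc}^{\mathbb{R}}=\{\phi=(a,u)\in\mathbb{R}\times X\}$, where $\phi=(a,u)$ is identified with the function $\phi(x)=-a\|x\|^2+\langle u,x\rangle$; differences of elements are taken componentwise in $\mathbb{R}\times X$. A function $f:X\to(-\infty,+\infty]$ is $\Phi_{lsc}^{\mathbb{R}}$-convex if $f(x)=\sup\{\phi(x):\phi\in\Phi_{lsc}^{\mathbb{R}},\ \phi\le f\}$ for all $x\in X$. For $x_0\in\mathrm{dom}\, f$, the $\Phi_{lsc}^{\mathbb{R}}$-subdifferential is $\partial_{lsc}^{\mathbb{R}} f(x_0)=\{\phi\in\Phi_{lsc}^{\mathbb{R}}: f(y)-f(x_0)\ge\phi(y)-\phi(x_0)\ \forall y\in X\}$, and $\mathrm{dom}\,\partial_{lsc}^{\mathbb{R}} f=\{x: \partial_{lsc}^{\mathbb{R}} f(x)\neq\emptyset\}$. The duality map is $J_\gamma(x)=\partial_{lsc}^{\mathbb{R}}\big(\tfrac{1}{2\gamma}\|\cdot\|^2\big)(x)=\{(a,(\tfrac1\gamma+2a)x): a\in\mathbb{R},\ 2\gamma a\ge -1\}$. *)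

theory Defs
  imports "HOL-Analysis.Analysis"
begin

text \<open>Elements of Phi_lsc^R are pairs (a,u) in R x X, acting as x |-> -a ||x||^2 + <u,x>.\<close>
definition phi_app :: "real \<times> 'a::real_inner \<Rightarrow> 'a \<Rightarrow> real" where
  "phi_app p x = - fst p * (norm x)\<^sup>2 + inner (snd p) x"

definition effdom :: "('a \<Rightarrow> ereal) \<Rightarrow> 'a set" where
  "effdom f = {x. f x < \<infinity>}"

definition proper_fun :: "('a \<Rightarrow> ereal) \<Rightarrow> bool" where
  "proper_fun f \<longleftrightarrow> (\<forall>x. f x \<noteq> -\<infinity>) \<and> effdom f \<noteq> {}"

definition phi_convex :: "('a::real_inner \<Rightarrow> ereal) \<Rightarrow> bool" where
  "phi_convex f \<longleftrightarrow>
     (\<forall>x. f x = Sup {ereal (phi_app p x) | p. \<forall>y. ereal (phi_app p y) \<le> f y})"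

definition phi_subdiff :: "('a::real_inner \<Rightarrow> ereal) \<Rightarrow> 'a \<Rightarrow> (real \<times> 'a) set" where
  "phi_subdiff f x0 = (if x0 \<in> effdom f then
     {p. \<forall>y. f y - f x0 \<ge> ereal (phi_app p y - phi_app p x0)} else {})"

definition subdiff_dom :: "('a::real_inner \<Rightarrow> ereal) \<Rightarrow> 'a set" where
  "subdiff_dom f = {x. phi_subdiff f x \<noteq> {}}"

definition dualmap :: "real \<Rightarrow> 'a::real_inner \<Rightarrow> (real \<times> 'a) set" where
  "dualmap \<gamma> x = phi_subdiff (\<lambda>z. ereal ((norm z)\<^sup>2 / (2 * \<gamma>))) x"

end

theory Submission
  imports Defs
begin

text \<open>Minimality of \<open>f + c \<parallel>\<cdot> - x\<^sub>0\<parallel>\<^sup>2\<close> at \<open>x\<close> says precisely that the element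
  \<open>(c, 2c x\<^sub>0)\<close> of \<open>\<Phi>\<^sub>l\<^sub>s\<^sub>c\<^sup>\<real>\<close>, i.e. \<open>z \<mapsto> c \<parallel>x\<^sub>0\<parallel>\<^sup>2 - c \<parallel>z - x\<^sub>0\<parallel>\<^sup>2\<close>, is a subgradient
  of \<open>f\<close> at \<open>x\<close>. With \<open>c = 1/(2\<gamma>) + a\<^sub>0 \<ge> 0\<close> it splits as \<open>(c - 1/(2\<gamma>), 2c x\<^sub>0) - (-1/(2\<gamma>), 0)\<close>,
  a difference of an element of \<open>J\<^sub>\<gamma>(x\<^sub>0)\<close> and one of \<open>J\<^sub>\<gamma>(x)\<close>.\<close>

lemma phi_app_centered:
  "phi_app (c, (2 * c) *\<^sub>R x0) z = c * (norm x0)\<^sup>2 - c * (norm (z - x0))\<^sup>2"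
  by (simp add: phi_app_def power2_norm_eq_inner inner_diff_left inner_diff_right
      inner_commute algebra_simps)

lemma mem_phi_subdiff_iff:
  "p \<in> phi_subdiff f x \<longleftrightarrow>
     x \<in> effdom f \<and> (\<forall>y. f y - f x \<ge> ereal (phi_app p y - phi_app p x))"
  by (simp add: phi_subdiff_def)

lemma mem_dualmap:
  assumes "\<gamma> > 0" and "2 * \<gamma> * a \<ge> -1"
  shows "(a, (1 / \<gamma> + 2 * a) *\<^sub>R x) \<in> dualmap \<gamma> x"
proof -
  define b where "b = a + 1 / (2 * \<gamma>)"
  have b_nonneg: "b \<ge> 0"
    using assms by (simp add: b_def field_simps)
  have "(norm y)\<^sup>2 / (2 * \<gamma>) - (norm x)\<^sup>2 / (2 * \<gamma>)
          - (phi_app (a, (1 / \<gamma> + 2 * a) *\<^sub>R x) y - phi_app (a, (1 / \<gamma> + 2 * a) *\<^sub>R x) x)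
        = b * (norm (y - x))\<^sup>2" for y
    using assms(1)
    by (simp add: b_def phi_app_def power2_norm_eq_inner inner_diff_left inner_diff_right
        inner_commute field_simps)
  then have "phi_app (a, (1 / \<gamma> + 2 * a) *\<^sub>R x) y - phi_app (a, (1 / \<gamma> + 2 * a) *\<^sub>R x) x
      \<le> (norm y)\<^sup>2 / (2 * \<gamma>) - (norm x)\<^sup>2 / (2 * \<gamma>)" for y
    using b_nonneg by (smt (verit) zero_le_mult_iff zero_le_power2)
  then show ?thesis
    by (simp add: dualmap_def mem_phi_subdiff_iff effdom_def)
qed

lemma quadratic_minimizer_phi_subgradient:
  assumes "proper_fun f"
    and min: "\<forall>z. f x + ereal (c * (norm (x - x0))\<^sup>2) \<le> f z + ereal (c * (norm (z - x0))\<^sup>2)"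
  shows "(c, (2 * c) *\<^sub>R x0) \<in> phi_subdiff f x"
proof -
  obtain w where "f w < \<infinity>"
    using assms(1) by (auto simp: proper_fun_def effdom_def)
  with min[rule_format, of w] have "f x \<noteq> \<infinity>"
    by auto
  moreover have "f x \<noteq> -\<infinity>"
    using assms(1) by (simp add: proper_fun_def)
  ultimately obtain r where r: "f x = ereal r"
    by (cases "f x") auto
  have "f y - f x \<ge> ereal (c * (norm (x - x0))\<^sup>2 - c * (norm (y - x0))\<^sup>2)" for y
    using min[rule_format, of y] r by (cases "f y") auto
  then show ?thesis
    by (simp add: mem_phi_subdiff_iff phi_app_centered effdom_def r)
qed

theorem proposition3:
  fixes f :: "'a::{real_inner, complete_space} \<Rightarrow> ereal"
    and \<gamma> :: real and x0 :: 'a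
  assumes "\<gamma> > 0"
    and "proper_fun f"
    and "phi_convex f"
    and "effdom f = subdiff_dom f"
    and "x0 \<in> effdom f"
    and "a0 \<ge> - 1 / (2 * \<gamma>)"
    and "\<forall>z. f x + ereal ((1 / (2 * \<gamma>) + a0) * (norm (x - x0))\<^sup>2)
              \<le> f z + ereal ((1 / (2 * \<gamma>) + a0) * (norm (z - x0))\<^sup>2)"
  shows "{(fst p0 - fst p, snd p0 - snd p) | p0 p. p0 \<in> dualmap \<gamma> x0 \<and> p \<in> dualmap \<gamma> x}
           \<inter> phi_subdiff f x \<noteq> {}"
proof -
  define c where "c = 1 / (2 * \<gamma>) + a0"
  have "(c, (2 * c) *\<^sub>R x0) \<in> phi_subdiff f x"
    unfolding c_def by (rule quadratic_minimizer_phi_subgradient[OF assms(2,7)])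
  moreover have "(a0, (2 * c) *\<^sub>R x0) \<in> dualmap \<gamma> x0"
  proof -
    have "1 / \<gamma> + 2 * a0 = 2 * c"
      by (simp add: c_def)
    then show ?thesis
      using mem_dualmap[of \<gamma> a0 x0] assms(1,6) by (simp add: field_simps)
  qed
  moreover have "(- 1 / (2 * \<gamma>), 0) \<in> dualmap \<gamma> x"
    using mem_dualmap[of \<gamma> "- 1 / (2 * \<gamma>)" x] assms(1) by simp
  moreover have "c = a0 - (- 1 / (2 * \<gamma>))"
    by (simp add: c_def)
  ultimately show ?thesis
    by force
qed

end
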